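(* Let $(X,d_X,\mu,T)$ and $(Y,d_Y,\nu,S)$ be compact metric measure-preserving systems, with anchor sequences $(a_r)_{r\ge1}$ dense in $\operatorname{supp}\mu$ and $(b_r)_{r\ge1}$ dense in $\operatorname{supp}\nu$. Then the following are equivalent: (1) the systems are disjoint, i.e. $\mathcal J(T,S)=\{\mu\otimes\nu\}$; (2) for every $n,m,R\ge1$, $\widetilde\Phi_{n,m,R}(\mathcal J(T,S))=\{\widetilde\Phi_{n,m,R}(\mu\otimes\nu)\}$.
   Context: A compact metric measure-preserving system $(X,d_X,\mu,T)$: $(X,d_X)$ compact metric, $\mu$ Borel probability, $T$ Borel with $T_\#\mu=\mu$. $\mathcal J(T,S)$: Borel probability measures on $X\times Y$ with marginals $\mu,\nu$ invariant under $T\times S$ (joinings). For $z_i=(x_i,y_i)$, $\mathcal D^X_{n,m}=(d_X(T^ax_i,T^bx_j))_{1\le i,j\le n,0\le a,b<m}$; the anchored array is $\widetilde{\mathcal D}^X_{n,m,R}=\bigl(\mathcal D^X_{n,m},(d_X(T^ax_i,a_r))_{1\le i\le n,0\le a<m,1\le r\le R}\bigr)$, and $\widetilde{\mathcal D}^Y_{n,m,R}$ analogously with $d_Y,S,b_r$. $\widetilde\Phi_{n,m,R}(\lambda)=\mathrm{Law}_{\lambda^{\otimes n}}(\widetilde{\mathcal D}^X_{n,m,R},\widetilde{\mathcal D}^Y_{n,m,R})$. *)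

theory Defs
  imports "HOL-Probability.Probability"
begin

definition cmmps :: "'a::metric_space measure \<Rightarrow> ('a \<Rightarrow> 'a) \<Rightarrow> bool" where
  "cmmps M T \<longleftrightarrow> compact (UNIV :: 'a set) \<and> prob_space M \<and> sets M = sets borel
     \<and> T \<in> borel_measurable borel \<and> distr M borel T = M"

definition supp :: "'a::metric_space measure \<Rightarrow> 'a set" where
  "supp M = {x. \<forall>e>0. emeasure M (ball x e) > 0}"

definition dense_in_supp :: "(nat \<Rightarrow> 'a::metric_space) \<Rightarrow> 'a measure \<Rightarrow> bool" where
  "dense_in_supp a M \<longleftrightarrow> a ` {1..} \<subseteq> supp M \<and> supp M \<subseteq> closure (a ` {1..})"

definition joinings ::
  "'a::metric_space measure \<Rightarrow> ('a \<Rightarrow> 'a) \<Rightarrow> 'b::metric_space measure \<Rightarrow> ('b \<Rightarrow> 'b)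
     \<Rightarrow> ('a \<times> 'b) measure set" where
  "joinings M T N S = {L. prob_space L \<and> sets L = sets (borel \<Otimes>\<^sub>M borel)
      \<and> distr L borel fst = M \<and> distr L borel snd = N
      \<and> distr L (borel \<Otimes>\<^sub>M borel) (\<lambda>(x, y). (T x, S y)) = L}"

text \<open>Index set of the anchored array: Inl (i,j,a,b) for the distance block,
Inr (i,a,r) for the anchor block, with 1 \<le> i,j \<le> n, 0 \<le> a,b < m, 1 \<le> r \<le> R.\<close>
definition arr_idx :: "nat \<Rightarrow> nat \<Rightarrow> nat \<Rightarrow> ((nat \<times> nat \<times> nat \<times> nat) + (nat \<times> nat \<times> nat)) set" where
  "arr_idx n m R = Inl ` ({1..n} \<times> {1..n} \<times> {..<m} \<times> {..<m}) \<union> Inr ` ({1..n} \<times> {..<m} \<times> {1..R})"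

definition anch_array ::
  "nat \<Rightarrow> nat \<Rightarrow> nat \<Rightarrow> ('a::metric_space \<Rightarrow> 'a) \<Rightarrow> (nat \<Rightarrow> 'a) \<Rightarrow> (nat \<Rightarrow> 'a)
     \<Rightarrow> ((nat \<times> nat \<times> nat \<times> nat) + (nat \<times> nat \<times> nat)) \<Rightarrow> real" where
  "anch_array n m R T a p = restrict (\<lambda>k. case k of
       Inl (i, j, s, t) \<Rightarrow> dist ((T ^^ s) (p i)) ((T ^^ t) (p j))
     | Inr (i, s, r) \<Rightarrow> dist ((T ^^ s) (p i)) (a r)) (arr_idx n m R)"

definition arr_space :: "nat \<Rightarrow> nat \<Rightarrow> nat \<Rightarrow> (((nat \<times> nat \<times> nat \<times> nat) + (nat \<times> nat \<times> nat)) \<Rightarrow> real) measure" where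
  "arr_space n m R = PiM (arr_idx n m R) (\<lambda>_. borel)"

definition Phi ::
  "nat \<Rightarrow> nat \<Rightarrow> nat \<Rightarrow> ('a::metric_space \<Rightarrow> 'a) \<Rightarrow> (nat \<Rightarrow> 'a)
     \<Rightarrow> ('b::metric_space \<Rightarrow> 'b) \<Rightarrow> (nat \<Rightarrow> 'b) \<Rightarrow> ('a \<times> 'b) measure
     \<Rightarrow> ((((nat \<times> nat \<times> nat \<times> nat) + (nat \<times> nat \<times> nat)) \<Rightarrow> real)
         \<times> (((nat \<times> nat \<times> nat \<times> nat) + (nat \<times> nat \<times> nat)) \<Rightarrow> real)) measure" where
  "Phi n m R T a S b L = distr (PiM {1..n} (\<lambda>_. L)) (arr_space n m R \<Otimes>\<^sub>M arr_space n m R)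
     (\<lambda>z. (anch_array n m R T a (\<lambda>i. fst (z i)), anch_array n m R S b (\<lambda>i. snd (z i))))"

end

theory Submission
  imports Defs
begin

(* With n = m = 1 the anchored array of a pair (x, y) only records the distances of x to a_1, ..., a_R
   and of y to b_1, ..., b_R. Hence Phi_{1,1,R}(L) fixes the L-measure of every product of finite
   intersections of open balls around anchors. These products form an intersection-stable family, and
   since the anchors are dense in the supports, every Borel set of X x Y coincides on supp mu x supp nu
   with a set of the sigma-algebra they generate. A coupling of mu and nu is concentrated on
   supp mu x supp nu, so it is determined by the values Phi_{1,1,R}(L), R >= 1. If these are the same
   for all joinings as for mu x nu, every joining equals mu x nu; and there is at least one joining,
   because the image of the set of joinings is a singleton. *)

lemma closed_supp:
  assumes "sets M = sets (borel :: 'a::metric_space measure)"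
  shows "closed (supp M)"
  unfolding closed_def open_dist
proof (intro ballI)
  fix x assume "x \<in> - supp M"
  then obtain e where e: "e > 0" "emeasure M (ball x e) = 0" by (auto simp: supp_def not_less)
  have "y \<notin> supp M" if y: "dist y x < e" for y
  proof -
    have "ball y (e - dist y x) \<subseteq> ball x e" by metric
    then have "emeasure M (ball y (e - dist y x)) = 0"
      using e(2) emeasure_mono[of "ball y (e - dist y x)" "ball x e" M] by (simp add: assms)
    with y show ?thesis by (auto simp: supp_def not_less intro!: exI[of _ "e - dist y x"])
  qed
  with e(1) show "\<exists>e>0. \<forall>y. dist y x < e \<longrightarrow> y \<in> - supp M" by blast
qed

lemma null_sets_compl_supp:
  assumes "compact (UNIV :: 'a::metric_space set)" and M: "sets M = sets (borel :: 'a measure)"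
  shows "- supp M \<in> null_sets M"
proof -
  have "\<exists>D. finite D \<and> (UNIV :: 'a set) \<subseteq> (\<Union>c\<in>D. ball c (1 / Suc n))" for n
    by (rule compactE_image[OF assms(1), of UNIV "\<lambda>c. ball c (1 / Suc n)"]) auto
  then obtain D where D: "\<And>n. finite (D n)" "\<And>n. (UNIV :: 'a set) \<subseteq> (\<Union>c\<in>D n. ball c (1 / Suc n))"
    by metis
  define I where "I = {(n, c). c \<in> D n \<and> emeasure M (ball c (1 / Suc n)) = 0}"
  have "countable I"
    by (rule countable_subset[of _ "Sigma UNIV D"]) (auto simp: I_def D(1) countable_finite)
  then have null: "(\<Union>(n, c)\<in>I. ball c (1 / Suc n)) \<in> null_sets M"
    by (rule null_sets_UN') (auto simp: I_def M null_sets_def)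
  have "- supp M \<subseteq> (\<Union>(n, c)\<in>I. ball c (1 / Suc n))"
  proof
    fix x assume "x \<in> - supp M"
    then obtain e where e: "e > 0" "emeasure M (ball x e) = 0" by (auto simp: supp_def not_less)
    obtain n :: nat where n: "1 / Suc n < e / 2"
      using e(1) by (metis half_gt_zero_iff nat_approx_posE of_nat_Suc)
    obtain c where c: "c \<in> D n" "x \<in> ball c (1 / Suc n)" using D(2)[of n] by blast
    have "ball c (1 / Suc n) \<subseteq> ball x e" using c(2) n by metric
    then have "emeasure M (ball c (1 / Suc n)) = 0"
      using e(2) emeasure_mono[of "ball c (1 / Suc n)" "ball x e" M] by (simp add: M)
    with c show "x \<in> (\<Union>(n, c)\<in>I. ball c (1 / Suc n))" by (force simp: I_def)
  qed
  moreover have "- supp M \<in> sets M"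
    using closed_supp[OF M] by (simp add: M)
  ultimately show ?thesis using null_sets_subset[OF null] by blast
qed

lemma AE_in_supp:
  assumes "compact (UNIV :: 'a::metric_space set)" and "sets M = sets (borel :: 'a measure)"
  shows "AE x in M. x \<in> supp M"
  using AE_not_in[OF null_sets_compl_supp[OF assms]] by simp

lemma AE_in_supp_Times:
  fixes M :: "'a::metric_space measure" and N :: "'b::metric_space measure"
  assumes "compact (UNIV :: 'a set)" "sets M = sets borel"
    and "compact (UNIV :: 'b set)" "sets N = sets borel"
    and L: "sets L = sets (borel \<Otimes>\<^sub>M borel)" "distr L borel fst = M" "distr L borel snd = N"
  shows "AE z in L. z \<in> supp M \<times> supp N"
proof -
  have meas: "fst \<in> L \<rightarrow>\<^sub>M borel" "snd \<in> L \<rightarrow>\<^sub>M borel"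
    by (simp_all add: measurable_cong_sets[OF L(1) refl])
  have "AE x in distr L borel fst. x \<in> supp M" "AE y in distr L borel snd. y \<in> supp N"
    unfolding L(2,3) using AE_in_supp[OF assms(1,2)] AE_in_supp[OF assms(3,4)] .
  then have "AE z in L. fst z \<in> supp M" "AE z in L. snd z \<in> supp N"
    using closed_supp[OF assms(2)] closed_supp[OF assms(4)]
    by (simp_all add: AE_distr_iff[OF meas(1)] AE_distr_iff[OF meas(2)])
  then show ?thesis by eventually_elim auto
qed

lemma AE_pair_measure_in_supp_Times:
  fixes M :: "'a::metric_space measure" and N :: "'b::metric_space measure"
  assumes "compact (UNIV :: 'a set)" "sets M = sets borel" "prob_space M"
    and "compact (UNIV :: 'b set)" "sets N = sets borel" "prob_space N"
  shows "AE z in M \<Otimes>\<^sub>M N. z \<in> supp M \<times> supp N"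
proof -
  interpret pair_prob_space M N
    using assms by (simp add: pair_prob_space_def pair_sigma_finite_def prob_space_imp_sigma_finite)
  have "AE x in M. AE y in N. (x, y) \<in> supp M \<times> supp N"
    using AE_in_supp[OF assms(1,2)]
  proof eventually_elim
    case (elim x)
    show ?case using AE_in_supp[OF assms(4,5)] by eventually_elim (simp add: elim)
  qed
  moreover have "supp M \<times> supp N \<in> sets (M \<Otimes>\<^sub>M N)"
    using closed_supp[OF assms(2)] closed_supp[OF assms(5)] assms
    by (auto intro!: pair_measureI borel_closed)
  ultimately show ?thesis
    using sets_eq_imp_space_eq[OF assms(2)] sets_eq_imp_space_eq[OF assms(5)]
    by (intro AE_pair_measure) (simp_all add: space_pair_measure)
qed

lemma sigma_sets_trace_subset:
  assumes gen: "\<And>G. G \<in> \<G> \<Longrightarrow> \<exists>E\<in>sigma_sets UNIV P. G \<inter> D = E \<inter> D"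
    and A: "A \<in> sigma_sets UNIV \<G>"
  shows "\<exists>E\<in>sigma_sets UNIV P. A \<inter> D = E \<inter> D"
  using A
proof induction
  case (Basic G)
  then show ?case by (rule gen)
next
  case Empty
  show ?case by (auto intro: sigma_sets.Empty)
next
  case (Compl A)
  then obtain E where "E \<in> sigma_sets UNIV P" "A \<inter> D = E \<inter> D" by blast
  then show ?case by (intro bexI[of _ "UNIV - E"]) (auto intro: sigma_sets.Compl)
next
  case (Union A)
  then obtain E where "\<And>i. E i \<in> sigma_sets UNIV P \<and> A i \<inter> D = E i \<inter> D" by metis
  then show ?case by (intro bexI[of _ "\<Union>i. E i"]) (auto intro: sigma_sets.Union)
qed

lemma Times_in_sigma_sets:
  assumes "UNIV \<in> P" "UNIV \<in> Q" "A \<in> sigma_sets UNIV P" "B \<in> sigma_sets UNIV Q"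
  shows "A \<times> B \<in> sigma_sets UNIV {X \<times> Y | X Y. X \<in> P \<and> Y \<in> Q}"
proof -
  have "sets (sigma UNIV P \<Otimes>\<^sub>M sigma UNIV Q)
      = sets (sigma (space (sigma UNIV P) \<times> space (sigma UNIV Q)) {X \<times> Y | X Y. X \<in> P \<and> Y \<in> Q})"
    using assms by (intro sets_pair_eq[where Ca="{UNIV}" and Cb="{UNIV}"]) auto
  moreover have "A \<times> B \<in> sets (sigma UNIV P \<Otimes>\<^sub>M sigma UNIV Q)"
    using assms by (intro pair_measureI) auto
  ultimately show ?thesis by simp
qed

lemma emeasure_eq_on_sigma_sets:
  assumes G: "Int_stable G" "G \<subseteq> sets L" "space L \<in> G"
    and L': "sets L' = sets L"
    and fin: "emeasure L (space L) \<noteq> \<infinity>"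
    and eq: "\<And>X. X \<in> G \<Longrightarrow> emeasure L X = emeasure L' X"
    and A: "A \<in> sigma_sets (space L) G"
  shows "emeasure L A = emeasure L' A"
proof -
  define F where "F = sigma (space L) G"
  have G_Pow: "G \<subseteq> Pow (space L)" using G(2) sets.sets_into_space by blast
  have sets_F: "sets F = sigma_sets (space L) G" by (simp add: F_def G_Pow)
  have sub: "subalgebra L F" "subalgebra L' F"
    using G(2) G_Pow sets_eq_imp_space_eq[OF L'] L'
    by (auto simp: subalgebra_def F_def intro!: sets.sigma_sets_subset)
  have "restr_to_subalg L F = restr_to_subalg L' F"
  proof (rule measure_eqI_generator_eq[OF G(1) G_Pow, where A="\<lambda>_. space L"])
    show "sets (restr_to_subalg L F) = sigma_sets (space L) G"
      "sets (restr_to_subalg L' F) = sigma_sets (space L) G"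
      using sub by (simp_all add: sets_restr_to_subalg sets_F)
  qed (use sub G fin eq in \<open>auto simp: emeasure_restr_to_subalg sets_F\<close>)
  then show ?thesis
    using sub A by (metis emeasure_restr_to_subalg sets_F)
qed

definition anchor_balls :: "(nat \<Rightarrow> 'a::metric_space) \<Rightarrow> 'a set set" where
  "anchor_balls a = {(\<Inter>(r, \<rho>)\<in>F. ball (a r) \<rho>) | F. finite F \<and> fst ` F \<subseteq> {1..}}"

definition anchor_boxes :: "(nat \<Rightarrow> 'a::metric_space) \<Rightarrow> (nat \<Rightarrow> 'b::metric_space) \<Rightarrow> ('a \<times> 'b) set set" where
  "anchor_boxes a b = {A \<times> B | A B. A \<in> anchor_balls a \<and> B \<in> anchor_balls b}"

lemma UNIV_in_anchor_balls: "UNIV \<in> anchor_balls a"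
  unfolding anchor_balls_def by (intro CollectI exI[of _ "{}"]) simp

lemma ball_in_anchor_balls: "r \<ge> 1 \<Longrightarrow> ball (a r) \<rho> \<in> anchor_balls a"
  unfolding anchor_balls_def by (intro CollectI exI[of _ "{(r, \<rho>)}"]) simp

lemma Int_stable_anchor_balls: "Int_stable (anchor_balls a)"
proof (rule Int_stableI)
  fix A B assume "A \<in> anchor_balls a" "B \<in> anchor_balls a"
  then obtain F G where "A = (\<Inter>(r, \<rho>)\<in>F. ball (a r) \<rho>)" "B = (\<Inter>(r, \<rho>)\<in>G. ball (a r) \<rho>)"
      "finite F" "finite G" "fst ` F \<subseteq> {1..}" "fst ` G \<subseteq> {1..}"
    by (auto simp: anchor_balls_def)
  then show "A \<inter> B \<in> anchor_balls a"
    unfolding anchor_balls_def by (intro CollectI exI[of _ "F \<union> G"]) auto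
qed

lemma anchor_balls_sets_borel: "anchor_balls a \<subseteq> sets borel"
  by (auto simp: anchor_balls_def intro!: borel_open open_INT)

lemma Int_stable_anchor_boxes: "Int_stable (anchor_boxes a b)"
proof (rule Int_stableI)
  fix X Y assume "X \<in> anchor_boxes a b" "Y \<in> anchor_boxes a b"
  then obtain A B A' B' where "X = A \<times> B" "Y = A' \<times> B'"
      "A \<in> anchor_balls a" "A' \<in> anchor_balls a" "B \<in> anchor_balls b" "B' \<in> anchor_balls b"
    by (auto simp: anchor_boxes_def)
  moreover have "A \<inter> A' \<in> anchor_balls a" "B \<inter> B' \<in> anchor_balls b"
    using calculation Int_stable_anchor_balls by (auto simp: Int_stable_def)
  ultimately show "X \<inter> Y \<in> anchor_boxes a b"
    by (auto simp: anchor_boxes_def Times_Int_Times)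
qed

lemma UNIV_in_anchor_boxes: "UNIV \<in> anchor_boxes a b"
proof -
  have "UNIV \<times> UNIV \<in> anchor_boxes a b"
    unfolding anchor_boxes_def using UNIV_in_anchor_balls[of a] UNIV_in_anchor_balls[of b] by blast
  then show ?thesis by simp
qed

lemma anchor_boxes_sets_pair_borel: "anchor_boxes a b \<subseteq> sets (borel \<Otimes>\<^sub>M borel)"
  using anchor_balls_sets_borel[of a] anchor_balls_sets_borel[of b]
  by (auto simp: anchor_boxes_def intro!: pair_measureI)

lemma open_trace_anchor_balls:
  assumes D: "D \<subseteq> closure (a ` {1..})" and U: "open U"
  shows "\<exists>E\<in>sigma_sets UNIV (anchor_balls a). U \<inter> D = E \<inter> D"
proof -
  define B where "B = {ball (a r) (real_of_rat q) | r q. r \<ge> 1 \<and> ball (a r) (real_of_rat q) \<subseteq> U}"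
  have "countable B"
  proof -
    have "B = (\<lambda>(r, q). ball (a r) (real_of_rat q)) ` {(r, q). r \<ge> 1 \<and> ball (a r) (real_of_rat q) \<subseteq> U}"
      by (auto simp: B_def)
    then show ?thesis by simp
  qed
  then have "\<Union>B \<in> sigma_sets UNIV (anchor_balls a)"
    by (rule sigma_sets_UNION) (auto simp: B_def intro!: sigma_sets.Basic ball_in_anchor_balls)
  moreover have "U \<inter> D \<subseteq> \<Union>B"
  proof
    fix x assume x: "x \<in> U \<inter> D"
    then obtain e where e: "e > 0" "ball x e \<subseteq> U" using U open_contains_ball by blast
    have "x \<in> closure (a ` {1..})" using x D by blast
    then obtain r where r: "r \<ge> 1" "dist (a r) x < e / 3"
      using e(1) unfolding closure_approachable by (metis atLeast_iff divide_pos_pos imageE zero_less_numeral)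
    obtain q where q: "e / 3 < real_of_rat q" "real_of_rat q < 2 * e / 3"
      using of_rat_dense[of "e / 3" "2 * e / 3"] e(1) by auto
    have "ball (a r) (real_of_rat q) \<subseteq> ball x e" using r q by metric
    moreover have "x \<in> ball (a r) (real_of_rat q)" using r q by simp
    ultimately show "x \<in> \<Union>B" using e(2) r(1) unfolding B_def by blast
  qed
  moreover have "\<Union>B \<subseteq> U" by (auto simp: B_def)
  ultimately show ?thesis by blast
qed

lemma borel_trace_anchor_balls:
  assumes "D \<subseteq> closure (a ` {1..})" and "A \<in> sets borel"
  shows "\<exists>E\<in>sigma_sets UNIV (anchor_balls a). A \<inter> D = E \<inter> D"
proof (rule sigma_sets_trace_subset)
  show "A \<in> sigma_sets UNIV {S. open S}" using assms(2) by (simp add: sets_borel)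
qed (use open_trace_anchor_balls[OF assms(1)] in blast)

lemma pair_borel_trace_anchor_boxes:
  fixes a :: "nat \<Rightarrow> 'a::metric_space" and b :: "nat \<Rightarrow> 'b::metric_space"
  assumes "D \<subseteq> closure (a ` {1..})" "D' \<subseteq> closure (b ` {1..})"
    and X: "X \<in> sets (borel \<Otimes>\<^sub>M borel)"
  shows "\<exists>E\<in>sigma_sets UNIV (anchor_boxes a b). X \<inter> (D \<times> D') = E \<inter> (D \<times> D')"
proof (rule sigma_sets_trace_subset[where \<G>="{A \<times> B | A B. A \<in> sets borel \<and> B \<in> sets borel}"])
  show "X \<in> sigma_sets UNIV {A \<times> B | A B. A \<in> sets borel \<and> B \<in> sets borel}"
    using X by (simp add: sets_pair_measure)
next
  fix G :: "('a \<times> 'b) set" assume "G \<in> {A \<times> B | A B. A \<in> sets borel \<and> B \<in> sets borel}"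
  then obtain A B where G: "G = A \<times> B" "A \<in> sets borel" "B \<in> sets borel" by blast
  obtain E where E: "E \<in> sigma_sets UNIV (anchor_balls a)" "A \<inter> D = E \<inter> D"
    using borel_trace_anchor_balls[OF assms(1) G(2)] by blast
  obtain E' where E': "E' \<in> sigma_sets UNIV (anchor_balls b)" "B \<inter> D' = E' \<inter> D'"
    using borel_trace_anchor_balls[OF assms(2) G(3)] by blast
  have "E \<times> E' \<in> sigma_sets UNIV (anchor_boxes a b)"
    unfolding anchor_boxes_def by (rule Times_in_sigma_sets[OF UNIV_in_anchor_balls UNIV_in_anchor_balls E(1) E'(1)])
  moreover have "G \<inter> (D \<times> D') = (E \<times> E') \<inter> (D \<times> D')"
    using E(2) E'(2) by (auto simp: G(1))
  ultimately show "\<exists>E\<in>sigma_sets UNIV (anchor_boxes a b). G \<inter> (D \<times> D') = E \<inter> (D \<times> D')" by blast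
qed

lemma measure_eqI_anchor_boxes:
  fixes L L' :: "('a::metric_space \<times> 'b::metric_space) measure"
  assumes "finite_measure L"
    and sets: "sets L = sets (borel \<Otimes>\<^sub>M borel)" "sets L' = sets (borel \<Otimes>\<^sub>M borel)"
    and dense: "D \<subseteq> closure (a ` {1..})" "D' \<subseteq> closure (b ` {1..})"
    and AE: "AE z in L. z \<in> D \<times> D'" "AE z in L'. z \<in> D \<times> D'"
    and eq: "\<And>X. X \<in> anchor_boxes a b \<Longrightarrow> emeasure L X = emeasure L' X"
  shows "L = L'"
proof (rule measure_eqI)
  show "sets L = sets L'" using sets by simp
  have space: "space L = UNIV"
    using sets_eq_imp_space_eq[OF sets(1)] by (simp add: space_pair_measure)
  fix X assume X: "X \<in> sets L"
  then obtain E where E: "E \<in> sigma_sets UNIV (anchor_boxes a b)" "X \<inter> (D \<times> D') = E \<inter> (D \<times> D')"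
    using pair_borel_trace_anchor_boxes[OF dense, of X] sets(1) by auto
  have "sigma_sets UNIV (anchor_boxes a b) \<subseteq> sets (borel \<Otimes>\<^sub>M borel)"
    using sets.sigma_sets_subset[OF anchor_boxes_sets_pair_borel] by (simp add: space_pair_measure)
  then have E_sets: "E \<in> sets L" "E \<in> sets L'"
    using E(1) sets by auto
  have "emeasure L X = emeasure L E"
  proof (rule emeasure_eq_AE)
    show "AE z in L. z \<in> X \<longleftrightarrow> z \<in> E" using AE(1) by eventually_elim (use E(2) in blast)
  qed (use X E_sets in auto)
  also have "\<dots> = emeasure L' E"
  proof (rule emeasure_eq_on_sigma_sets[OF Int_stable_anchor_boxes])
    show "anchor_boxes a b \<subseteq> sets L" using anchor_boxes_sets_pair_borel sets(1) by simp
  qed (use E(1) UNIV_in_anchor_boxes sets eq finite_measure.emeasure_finite[OF assms(1)] in \<open>simp_all add: space\<close>)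
  also have "\<dots> = emeasure L' X"
  proof (rule emeasure_eq_AE)
    show "AE z in L'. z \<in> E \<longleftrightarrow> z \<in> X" using AE(2) by eventually_elim (use E(2) in blast)
  qed (use X E_sets sets in auto)
  finally show "emeasure L X = emeasure L' X" .
qed

(* For n = m = 1 the distance block of the array is the single entry dist x x = 0. *)
definition anchor_profile ::
  "(nat \<Rightarrow> 'a::metric_space) \<Rightarrow> nat \<Rightarrow> 'a \<Rightarrow> ((nat \<times> nat \<times> nat \<times> nat) + (nat \<times> nat \<times> nat)) \<Rightarrow> real" where
  "anchor_profile a R x = (\<lambda>k\<in>arr_idx 1 1 R. case k of Inl _ \<Rightarrow> 0 | Inr (_, _, r) \<Rightarrow> dist x (a r))"

lemma anch_array_1_1: "anch_array 1 1 R T a p = anchor_profile a R (p 1)"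
  unfolding anch_array_def anchor_profile_def by (intro restrict_ext) (auto simp: arr_idx_def)

lemma anchor_profile_measurable: "anchor_profile a R \<in> borel \<rightarrow>\<^sub>M arr_space 1 1 R"
  unfolding anchor_profile_def arr_space_def
proof (rule measurable_restrict)
  fix k
  show "(\<lambda>x. case k of Inl _ \<Rightarrow> 0 | Inr (_, _, r) \<Rightarrow> dist x (a r)) \<in> borel_measurable borel"
    by (cases k) (auto intro!: borel_measurable_continuous_onI continuous_intros)
qed

lemma anchor_profile_pair_measurable:
  "(\<lambda>z. (anchor_profile a R (fst z), anchor_profile b R (snd z)))
    \<in> borel \<Otimes>\<^sub>M borel \<rightarrow>\<^sub>M arr_space 1 1 R \<Otimes>\<^sub>M arr_space 1 1 R"
  by (intro measurable_Pair measurable_compose[OF measurable_fst anchor_profile_measurable]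
      measurable_compose[OF measurable_snd anchor_profile_measurable])

lemma Phi_1_1:
  assumes L: "prob_space L" "sets L = sets (borel \<Otimes>\<^sub>M borel)"
  shows "Phi 1 1 R T a S b L = distr L (arr_space 1 1 R \<Otimes>\<^sub>M arr_space 1 1 R)
    (\<lambda>z. (anchor_profile a R (fst z), anchor_profile b R (snd z)))"
    (is "_ = distr L ?A ?G")
proof -
  have G: "?G \<in> L \<rightarrow>\<^sub>M ?A"
    unfolding measurable_cong_sets[OF L(2) refl] by (rule anchor_profile_pair_measurable)
  have "Phi 1 1 R T a S b L = distr (PiM {1::nat} (\<lambda>_. L)) ?A (?G \<circ> (\<lambda>z. z 1))"
    unfolding Phi_def anch_array_1_1 o_def atLeastAtMost_singleton by (rule refl)
  also have "\<dots> = distr (distr (PiM {1::nat} (\<lambda>_. L)) L (\<lambda>z. z 1)) ?A ?G"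
    by (rule distr_distr[symmetric, OF G]) (rule measurable_component_singleton, simp)
  also have "distr (PiM {1::nat} (\<lambda>_. L)) L (\<lambda>z. z 1) = L"
    using distr_PiM_component[of "{1::nat}" "\<lambda>_. L" 1] L(1) by simp
  finally show ?thesis .
qed

lemma anchor_ball_vimage_profile:
  assumes F: "finite F" "fst ` F \<subseteq> {1..R}"
  shows "\<exists>C\<in>sets (arr_space 1 1 R). (\<Inter>(r, \<rho>)\<in>F. ball (a r) \<rho>) = anchor_profile a R -` C"
proof
  define C where "C = {w \<in> space (arr_space 1 1 R). \<forall>(r, \<rho>)\<in>F. w (Inr (1, 0, r)) < \<rho>}"
  have idx: "Inr (1, 0, r) \<in> arr_idx 1 1 R" if "(r, \<rho>) \<in> F" for r \<rho>
    using F(2) that by (force simp: arr_idx_def)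
  have "Measurable.pred (arr_space 1 1 R) (\<lambda>w. \<forall>(r, \<rho>)\<in>F. w (Inr (1, 0, r)) < \<rho>)"
  proof (intro pred_intros_finite F(1))
    fix i assume "i \<in> F"
    then obtain r \<rho> where i: "i = (r, \<rho>)" "Inr (1, 0, r) \<in> arr_idx 1 1 R" using idx by (cases i) blast
    have [measurable]: "(\<lambda>w. w (Inr (1, 0, r))) \<in> borel_measurable (arr_space 1 1 R)"
      unfolding arr_space_def using i(2) by (rule measurable_component_singleton)
    have "Measurable.pred (arr_space 1 1 R) (\<lambda>w. w (Inr (1, 0, r)) < \<rho>)" by measurable
    then show "Measurable.pred (arr_space 1 1 R) (\<lambda>w. case i of (r, \<rho>) \<Rightarrow> w (Inr (1, 0, r)) < \<rho>)"
      by (simp add: i(1))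
  qed
  then show "C \<in> sets (arr_space 1 1 R)" unfolding C_def by (rule predE)
  have "anchor_profile a R x \<in> space (arr_space 1 1 R)" for x
    by (simp add: anchor_profile_def arr_space_def space_PiM)
  then show "(\<Inter>(r, \<rho>)\<in>F. ball (a r) \<rho>) = anchor_profile a R -` C"
    using idx by (auto simp: C_def anchor_profile_def dist_commute)
qed

lemma emeasure_anchor_boxes_eq:
  fixes L L' :: "('a::metric_space \<times> 'b::metric_space) measure"
  assumes L: "prob_space L" "sets L = sets (borel \<Otimes>\<^sub>M borel)"
    and L': "prob_space L'" "sets L' = sets (borel \<Otimes>\<^sub>M borel)"
    and Phi_eq: "\<And>R. R \<ge> 1 \<Longrightarrow> Phi 1 1 R T a S b L = Phi 1 1 R T a S b L'"
    and X: "X \<in> anchor_boxes a b"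
  shows "emeasure L X = emeasure L' X"
proof -
  obtain F F' where F: "X = (\<Inter>(r, \<rho>)\<in>F. ball (a r) \<rho>) \<times> (\<Inter>(r, \<rho>)\<in>F'. ball (b r) \<rho>)"
    "finite F" "finite F'" "fst ` F \<subseteq> {1..}" "fst ` F' \<subseteq> {1..}"
    using X by (auto simp: anchor_boxes_def anchor_balls_def)
  define R where "R = Max (insert 1 (fst ` F \<union> fst ` F'))"
  have "finite (insert 1 (fst ` F \<union> fst ` F'))" using F(2,3) by simp
  then have R: "R \<ge> 1" "fst ` F \<subseteq> {1..R}" "fst ` F' \<subseteq> {1..R}"
    using F(4,5) unfolding R_def by (auto simp: image_subset_iff)
  from anchor_ball_vimage_profile[OF F(2) R(2)] obtain C
    where C: "C \<in> sets (arr_space 1 1 R)" "(\<Inter>(r, \<rho>)\<in>F. ball (a r) \<rho>) = anchor_profile a R -` C" ..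
  from anchor_ball_vimage_profile[OF F(3) R(3)] obtain C'
    where C': "C' \<in> sets (arr_space 1 1 R)" "(\<Inter>(r, \<rho>)\<in>F'. ball (b r) \<rho>) = anchor_profile b R -` C'" ..
  have X_vimage: "X = (\<lambda>z. (anchor_profile a R (fst z), anchor_profile b R (snd z))) -` (C \<times> C')"
    unfolding F(1) C(2) C'(2) by auto
  have Phi_box: "emeasure (Phi 1 1 R T a S b M) (C \<times> C') = emeasure M X"
    if M: "prob_space M" "sets M = sets (borel \<Otimes>\<^sub>M borel)" for M :: "('a \<times> 'b) measure"
  proof -
    have "space M = UNIV"
      using sets_eq_imp_space_eq[OF M(2)] by (simp add: space_pair_measure)
    moreover have "C \<times> C' \<in> sets (arr_space 1 1 R \<Otimes>\<^sub>M arr_space 1 1 R)"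
      using C(1) C'(1) by (rule pair_measureI)
    ultimately show ?thesis
      unfolding Phi_1_1[OF M] X_vimage using anchor_profile_pair_measurable
      by (subst emeasure_distr) (simp_all add: measurable_cong_sets[OF M(2) refl])
  qed
  show ?thesis using Phi_box[OF L] Phi_box[OF L'] Phi_eq[OF R(1)] by simp
qed

lemma coupling_eq_pair_measure:
  fixes M :: "'a::metric_space measure" and N :: "'b::metric_space measure"
  assumes "cmmps M T" "cmmps N S" "dense_in_supp a M" "dense_in_supp b N"
    and L: "prob_space L" "sets L = sets (borel \<Otimes>\<^sub>M borel)" "distr L borel fst = M" "distr L borel snd = N"
    and Phi_eq: "\<And>R. R \<ge> 1 \<Longrightarrow> Phi 1 1 R T a S b L = Phi 1 1 R T a S b (M \<Otimes>\<^sub>M N)"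
  shows "L = M \<Otimes>\<^sub>M N"
proof -
  have M: "compact (UNIV :: 'a set)" "sets M = sets borel" "prob_space M"
    and N: "compact (UNIV :: 'b set)" "sets N = sets borel" "prob_space N"
    using assms(1,2) by (auto simp: cmmps_def)
  have MN: "prob_space (M \<Otimes>\<^sub>M N)" "sets (M \<Otimes>\<^sub>M N) = sets (borel \<Otimes>\<^sub>M borel)"
    using prob_space_pair[OF M(3) N(3)] sets_pair_measure_cong[OF M(2) N(2)] by simp_all
  show ?thesis
  proof (rule measure_eqI_anchor_boxes[OF _ L(2) MN(2)])
    show "finite_measure L" using L(1) by (simp add: prob_space_def)
    show "supp M \<subseteq> closure (a ` {1..})" "supp N \<subseteq> closure (b ` {1..})"
      using assms(3,4) by (simp_all add: dense_in_supp_def)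
    show "AE z in L. z \<in> supp M \<times> supp N"
      using AE_in_supp_Times[OF M(1,2) N(1,2) L(2-4)] .
    show "AE z in M \<Otimes>\<^sub>M N. z \<in> supp M \<times> supp N"
      using AE_pair_measure_in_supp_Times[OF M N] .
    show "emeasure L X = emeasure (M \<Otimes>\<^sub>M N) X" if "X \<in> anchor_boxes a b" for X
      using emeasure_anchor_boxes_eq[OF L(1,2) MN Phi_eq that] .
  qed
qed

theorem theorem14:
  fixes M :: "'a::metric_space measure" and T :: "'a \<Rightarrow> 'a" and a :: "nat \<Rightarrow> 'a"
    and N :: "'b::metric_space measure" and S :: "'b \<Rightarrow> 'b" and b :: "nat \<Rightarrow> 'b"
  assumes "cmmps M T" and "cmmps N S"
    and "dense_in_supp a M" and "dense_in_supp b N"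
  shows "joinings M T N S = {M \<Otimes>\<^sub>M N} \<longleftrightarrow>
    (\<forall>n m R. n \<ge> 1 \<longrightarrow> m \<ge> 1 \<longrightarrow> R \<ge> 1 \<longrightarrow>
       Phi n m R T a S b ` joinings M T N S = {Phi n m R T a S b (M \<Otimes>\<^sub>M N)})"
proof
  assume "joinings M T N S = {M \<Otimes>\<^sub>M N}"
  then show "\<forall>n m R. n \<ge> 1 \<longrightarrow> m \<ge> 1 \<longrightarrow> R \<ge> 1 \<longrightarrow>
      Phi n m R T a S b ` joinings M T N S = {Phi n m R T a S b (M \<Otimes>\<^sub>M N)}" by simp
next
  assume Phi_const: "\<forall>n m R. n \<ge> 1 \<longrightarrow> m \<ge> 1 \<longrightarrow> R \<ge> 1 \<longrightarrow>
      Phi n m R T a S b ` joinings M T N S = {Phi n m R T a S b (M \<Otimes>\<^sub>M N)}"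
  have "L = M \<Otimes>\<^sub>M N" if L: "L \<in> joinings M T N S" for L
  proof (rule coupling_eq_pair_measure[OF assms])
    show "prob_space L" "sets L = sets (borel \<Otimes>\<^sub>M borel)"
      "distr L borel fst = M" "distr L borel snd = N"
      using L by (simp_all add: joinings_def)
    fix R :: nat assume "R \<ge> 1"
    then have "Phi 1 1 R T a S b ` joinings M T N S = {Phi 1 1 R T a S b (M \<Otimes>\<^sub>M N)}"
      using Phi_const by simp
    then show "Phi 1 1 R T a S b L = Phi 1 1 R T a S b (M \<Otimes>\<^sub>M N)" using L by blast
  qed
  moreover have "Phi 1 1 1 T a S b ` joinings M T N S \<noteq> {}"
    using Phi_const by simp
  ultimately show "joinings M T N S = {M \<Otimes>\<^sub>M N}" by blast
qed

end
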